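(* Let $\beta>1$. For each $t_0>0$ there exists a constant $C_1>0$ such that $$C_1\beta^{-m(t,u)}\le|t-u|\le\beta^{-m(t,u)}$$ for all $t,u\in\mathcal U\cap[t_0,1]$.
   Context: Let $\gamma=\beta-1$ if $\beta$ is an integer and $\gamma=\lfloor\beta\rfloor$ otherwise. $T_\beta(x)=\beta x-\lfloor\beta x\rfloor$ on $[0,1)$. For $x\in(0,1]$ the quasi-greedy $\beta$-expansion is the lexicographically largest sequence in $\{0,\dots,\gamma\}^{\mathbb N}$, not eventually zero, with $x=\sum_i a_i\beta^{-i}$. For $t,u\in(0,1]$ with quasi-greedy expansions $(t_i),(u_i)$, $m(t,u)=\sup\{k\ge1\colon t_i=u_i\text{ for all }i\in\{1,\dots,k\}\}$ is the length of the longest common prefix (taken as $0$ if $t_1\ne u_1$). For $0<t<1$ let $K(t)=\{x\in[0,1)\colon T_\beta^k(x)\notin(0,t)\ \forall k\ge0\}$, $K(0)=[0,1)$, $K(1)=\{0\}$. A parameter $t\in[0,1]$ is a bifurcation parameter if $t\in\{0,1\}$, or $0<t<1$ and for every $\delta>0$ there is $t'\in(t-\delta,t+\delta)$ with $K(t')\ne K(t)$; $\mathcal U$ is the set of bifurcation parameters in $[0,1)$. *)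

theory Defs
  imports Complex_Main "HOL-Library.Extended_Nat"
begin

definition beta_gamma :: "real \<Rightarrow> nat" where
  "beta_gamma \<beta> = (if \<beta> \<in> \<int> then nat \<lfloor>\<beta>\<rfloor> - 1 else nat \<lfloor>\<beta>\<rfloor>)"

definition T_beta :: "real \<Rightarrow> real \<Rightarrow> real" where
  "T_beta \<beta> x = \<beta> * x - of_int \<lfloor>\<beta> * x\<rfloor>"

text \<open>Digit sequences are indexed from 0: a i is the paper's digit a_(i+1),
  so x = sum_i a_i beta^(-(i+1)).\<close>
definition is_beta_exp_nez :: "real \<Rightarrow> real \<Rightarrow> (nat \<Rightarrow> nat) \<Rightarrow> bool" where
  "is_beta_exp_nez \<beta> x a \<longleftrightarrow>
     (\<forall>i. a i \<le> beta_gamma \<beta>) \<and>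
     \<not> (\<exists>N. \<forall>i\<ge>N. a i = 0) \<and>
     (\<lambda>i. real (a i) / \<beta> ^ (i + 1)) sums x"

definition lex_less :: "(nat \<Rightarrow> nat) \<Rightarrow> (nat \<Rightarrow> nat) \<Rightarrow> bool" where
  "lex_less a b \<longleftrightarrow> (\<exists>n. (\<forall>j<n. a j = b j) \<and> a n < b n)"

definition quasi_greedy :: "real \<Rightarrow> real \<Rightarrow> (nat \<Rightarrow> nat)" where
  "quasi_greedy \<beta> x = (THE a. is_beta_exp_nez \<beta> x a \<and>
       (\<forall>b. is_beta_exp_nez \<beta> x b \<longrightarrow> b = a \<or> lex_less b a))"

definition m_prefix :: "real \<Rightarrow> real \<Rightarrow> real \<Rightarrow> enat" where
  "m_prefix \<beta> t u = Sup {enat k | k. k \<ge> 1 \<and>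
       (\<forall>j<k. quasi_greedy \<beta> t j = quasi_greedy \<beta> u j)}"

definition beta_pow_neg :: "real \<Rightarrow> enat \<Rightarrow> real" where
  "beta_pow_neg \<beta> m = (case m of enat k \<Rightarrow> 1 / \<beta> ^ k | \<infinity> \<Rightarrow> 0)"

definition K_set :: "real \<Rightarrow> real \<Rightarrow> real set" where
  "K_set \<beta> t =
     (if t = 0 then {0..<1}
      else if t = 1 then {0}
      else {x \<in> {0..<1}. \<forall>k. (T_beta \<beta> ^^ k) x \<notin> {0<..<t}})"

definition bifurcation :: "real \<Rightarrow> real \<Rightarrow> bool" where
  "bifurcation \<beta> t \<longleftrightarrow> t = 0 \<or> t = 1 \<or>
     (0 < t \<and> t < 1 \<and>
      (\<forall>\<delta>>0. \<exists>t'\<in>{0..1}. \<bar>t' - t\<bar> < \<delta> \<and> K_set \<beta> t' \<noteq> K_set \<beta> t))"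

definition U_set :: "real \<Rightarrow> real set" where
  "U_set \<beta> = {t \<in> {0..<1}. bifurcation \<beta> t}"

end

theory Submission
  imports Defs
begin

text \<open>For x in (0,1] the quasi-greedy expansion is the digit sequence of the orbit of x under
  the left-continuous beta-map S x = beta x - ceil (beta x) + 1. If the expansions of t < u first
  differ at index k, then S^k u - S^k t = beta^k (u - t) \<le> 1, and the digit jump gives
  S^(k+1) u \<le> beta^(k+1) (u - t); so it suffices to bound S^(k+1) u below uniformly.

  Near a parameter v the iterate T^n agrees with S^n and is continuous unless the S-orbit of v
  passes through 1 before time n. Hence if v is a bifurcation parameter and S^n v < v, the
  orbit of v passes through 1 before time n: otherwise points close to v would enter (0, s) at
  time n for every s close to v. Consequently S^(k+1) u is either at least u \<ge> t0 or a point
  S^r 1 of the orbit of 1, and S^r 1 is at least the minimum of S^i 1 over i \<le> M, the first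
  time with S^M 1 < t0: if r > M and the orbit of u hits 1 at time j, then
  S^(j+M) t < S^(j+M) u = S^M 1 < t, so the orbit of t would pass through 1 at a time i \<le> k,
  where S^i t < S^i u \<le> 1.\<close>

definition qg_map :: "real \<Rightarrow> real \<Rightarrow> real" where
  "qg_map \<beta> x = \<beta> * x - of_int \<lceil>\<beta> * x\<rceil> + 1"

definition qg_digit :: "real \<Rightarrow> real \<Rightarrow> nat" where
  "qg_digit \<beta> x = nat (\<lceil>\<beta> * x\<rceil> - 1)"

definition qg_digits :: "real \<Rightarrow> real \<Rightarrow> nat \<Rightarrow> nat" where
  "qg_digits \<beta> x i = qg_digit \<beta> ((qg_map \<beta> ^^ i) x)"

lemma qg_map_gt_0: "0 < qg_map \<beta> x" and qg_map_le_1: "qg_map \<beta> x \<le> 1"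
  using ceiling_correct[of "\<beta> * x"] unfolding qg_map_def by linarith+

lemma qg_orbit_gt_0: "0 < x \<Longrightarrow> 0 < (qg_map \<beta> ^^ n) x"
  by (cases n) (auto simp: qg_map_gt_0)

lemma qg_orbit_le_1: "x \<le> 1 \<Longrightarrow> (qg_map \<beta> ^^ n) x \<le> 1"
  by (cases n) (auto simp: qg_map_le_1)

lemma qg_map_eq_1_iff: "qg_map \<beta> x = 1 \<longleftrightarrow> \<beta> * x \<in> \<int>"
proof
  assume "qg_map \<beta> x = 1"
  then have "\<beta> * x = of_int \<lceil>\<beta> * x\<rceil>" unfolding qg_map_def by simp
  then show "\<beta> * x \<in> \<int>" by (metis Ints_of_int)
next
  assume "\<beta> * x \<in> \<int>"
  then show "qg_map \<beta> x = 1" unfolding qg_map_def by (auto elim: Ints_cases)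
qed

lemma of_nat_qg_digit:
  assumes "0 < \<beta>" "0 < x"
  shows "real (qg_digit \<beta> x) = of_int \<lceil>\<beta> * x\<rceil> - 1"
proof -
  have "1 \<le> \<lceil>\<beta> * x\<rceil>" using assms by (simp add: int_one_le_iff_zero_less)
  then show ?thesis unfolding qg_digit_def by simp
qed

lemma qg_orbit_Suc:
  assumes "0 < \<beta>" "0 < x"
  shows "(qg_map \<beta> ^^ Suc n) x = \<beta> * (qg_map \<beta> ^^ n) x - real (qg_digits \<beta> x n)"
  using of_nat_qg_digit[OF assms(1) qg_orbit_gt_0[OF assms(2)]]
  by (simp add: qg_digits_def qg_map_def)

lemma qg_orbit_partial_sum:
  assumes "0 < \<beta>" "0 < x"
  shows "x = (\<Sum>i<n. real (qg_digits \<beta> x i) / \<beta> ^ (i + 1)) + (qg_map \<beta> ^^ n) x / \<beta> ^ n"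
proof (induction n)
  case (Suc n)
  have "(qg_map \<beta> ^^ Suc n) x / \<beta> ^ Suc n
      = (qg_map \<beta> ^^ n) x / \<beta> ^ n - real (qg_digits \<beta> x n) / \<beta> ^ (n + 1)"
    using qg_orbit_Suc[OF assms, of n] assms(1) by (simp add: field_simps)
  with Suc show ?case by simp
qed simp

lemma qg_orbit_diff:
  assumes "0 < \<beta>" "0 < t" "0 < u" "\<forall>j<i. qg_digits \<beta> t j = qg_digits \<beta> u j"
  shows "(qg_map \<beta> ^^ i) u - (qg_map \<beta> ^^ i) t = \<beta> ^ i * (u - t)"
  using assms(4)
proof (induction i)
  case (Suc i)
  then have "(qg_map \<beta> ^^ Suc i) u - (qg_map \<beta> ^^ Suc i) t
      = \<beta> * ((qg_map \<beta> ^^ i) u - (qg_map \<beta> ^^ i) t)"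
    using qg_orbit_Suc[OF assms(1,2), of i] qg_orbit_Suc[OF assms(1,3), of i]
    by (simp add: algebra_simps)
  with Suc show ?case by simp
qed simp

lemma int_beta_gamma:
  assumes "1 < \<beta>"
  shows "int (beta_gamma \<beta>) = \<lceil>\<beta>\<rceil> - 1"
proof (cases "\<beta> \<in> \<int>")
  case True
  then obtain m where "\<beta> = of_int m" by (auto elim: Ints_cases)
  with True assms show ?thesis unfolding beta_gamma_def by simp
next
  case False
  then have "\<lceil>\<beta>\<rceil> = \<lfloor>\<beta>\<rfloor> + 1" by (metis Ints_of_int ceiling_altdef)
  moreover have "1 \<le> \<lfloor>\<beta>\<rfloor>" using assms by simp
  ultimately show ?thesis using False unfolding beta_gamma_def by simp
qed

lemma qg_digit_le_beta_gamma:
  assumes "1 < \<beta>" "x \<le> 1"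
  shows "qg_digit \<beta> x \<le> beta_gamma \<beta>"
proof -
  have "\<lceil>\<beta> * x\<rceil> \<le> \<lceil>\<beta>\<rceil>" using assms by (intro ceiling_mono) simp
  then show ?thesis using int_beta_gamma[OF assms(1)] unfolding qg_digit_def by linarith
qed

lemma qg_digits_not_eventually_0:
  assumes "1 < \<beta>" "0 < x" "x \<le> 1"
  shows "\<not> (\<exists>N. \<forall>i\<ge>N. qg_digits \<beta> x i = 0)"
proof
  assume "\<exists>N. \<forall>i\<ge>N. qg_digits \<beta> x i = 0"
  then obtain N where N: "\<forall>i\<ge>N. qg_digits \<beta> x i = 0" by blast
  have grow: "(qg_map \<beta> ^^ (N + i)) x = \<beta> ^ i * (qg_map \<beta> ^^ N) x" for i
  proof (induction i)
    case (Suc i)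
    have "(qg_map \<beta> ^^ Suc (N + i)) x = \<beta> * (qg_map \<beta> ^^ (N + i)) x"
      using qg_orbit_Suc[of \<beta> x "N + i"] N assms by simp
    with Suc show ?case by simp
  qed simp
  have pos: "0 < (qg_map \<beta> ^^ N) x" using qg_orbit_gt_0[OF assms(2)] .
  obtain i where "1 / (qg_map \<beta> ^^ N) x < \<beta> ^ i" using real_arch_pow[OF assms(1)] by blast
  then have "1 < (qg_map \<beta> ^^ (N + i)) x" unfolding grow using pos by (simp add: field_simps)
  then show False using qg_orbit_le_1[OF assms(3)] by (metis not_le)
qed

lemma qg_digits_sums:
  assumes "1 < \<beta>" "0 < x" "x \<le> 1"
  shows "(\<lambda>i. real (qg_digits \<beta> x i) / \<beta> ^ (i + 1)) sums x"
proof -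
  have "(\<lambda>n. (qg_map \<beta> ^^ n) x / \<beta> ^ n) \<longlonglongrightarrow> 0"
  proof (rule tendsto_sandwich[of "\<lambda>_. 0" _ _ "\<lambda>n. (1 / \<beta>) ^ n"])
    show "\<forall>\<^sub>F n in sequentially. 0 \<le> (qg_map \<beta> ^^ n) x / \<beta> ^ n"
      using qg_orbit_gt_0[OF assms(2)] assms(1) by (auto intro!: always_eventually less_imp_le)
    show "\<forall>\<^sub>F n in sequentially. (qg_map \<beta> ^^ n) x / \<beta> ^ n \<le> (1 / \<beta>) ^ n"
      using qg_orbit_le_1[OF assms(3)] assms(1)
      by (auto intro!: always_eventually divide_right_mono simp: power_divide)
    show "(\<lambda>n. (1 / \<beta>) ^ n) \<longlonglongrightarrow> 0" using assms(1) by (intro LIMSEQ_realpow_zero) auto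
  qed simp
  then have "(\<lambda>n. x - (qg_map \<beta> ^^ n) x / \<beta> ^ n) \<longlonglongrightarrow> x"
    using tendsto_diff[OF tendsto_const] by fastforce
  moreover have "(\<Sum>i<n. real (qg_digits \<beta> x i) / \<beta> ^ (i + 1)) = x - (qg_map \<beta> ^^ n) x / \<beta> ^ n"
    for n using qg_orbit_partial_sum[of \<beta> x n] assms by simp
  ultimately show ?thesis unfolding sums_def by simp
qed

lemma qg_digits_expansion:
  assumes "1 < \<beta>" "0 < x" "x \<le> 1"
  shows "is_beta_exp_nez \<beta> x (qg_digits \<beta> x)"
  unfolding is_beta_exp_nez_def
  using qg_digit_le_beta_gamma[OF assms(1) qg_orbit_le_1[OF assms(3)]]
    qg_digits_not_eventually_0[OF assms] qg_digits_sums[OF assms]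
  by (auto simp: qg_digits_def)

lemma lex_less_asym: "lex_less a b \<Longrightarrow> \<not> lex_less b a"
  unfolding lex_less_def by (metis less_imp_not_less nat_neq_iff)

lemma qg_digits_lex_max:
  assumes "1 < \<beta>" "0 < x" "x \<le> 1" and c: "is_beta_exp_nez \<beta> x c"
  shows "c = qg_digits \<beta> x \<or> lex_less c (qg_digits \<beta> x)"
proof (rule ccontr)
  let ?a = "qg_digits \<beta> x"
  assume contra: "\<not> (c = ?a \<or> lex_less c ?a)"
  then have ex: "\<exists>i. c i \<noteq> ?a i" by auto
  define n where "n = (LEAST i. c i \<noteq> ?a i)"
  have below: "\<forall>j<n. c j = ?a j" unfolding n_def using not_less_Least by blast
  have "c n \<noteq> ?a n" unfolding n_def using LeastI_ex[OF ex] .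
  moreover have "\<not> c n < ?a n" using contra below unfolding lex_less_def by blast
  ultimately have digit_gt: "?a n + 1 \<le> c n" by simp
  have c_sums: "(\<lambda>i. real (c i) / \<beta> ^ (i + 1)) sums x"
    and c_nz: "\<not> (\<exists>N. \<forall>i\<ge>N. c i = 0)" using c unfolding is_beta_exp_nez_def by auto
  define g where "g = (\<lambda>i. real (c (i + Suc n)) / \<beta> ^ (i + Suc n + 1))"
  have g_sums: "g sums (x - (\<Sum>i<Suc n. real (c i) / \<beta> ^ (i + 1)))"
    using sums_split_initial_segment[OF c_sums, of "Suc n"] unfolding g_def by simp
  obtain i where i: "Suc n \<le> i" "c i \<noteq> 0" using c_nz by blast
  have "0 < g (i - Suc n)" unfolding g_def using i assms(1) by simp
  then have "0 < suminf g"
    using assms(1) by (intro suminf_pos2[OF sums_summable[OF g_sums]]) (auto simp: g_def)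
  moreover have "suminf g = (qg_map \<beta> ^^ n) x / \<beta> ^ n - real (c n) / \<beta> ^ (n + 1)"
    using sums_unique[OF g_sums] below qg_orbit_partial_sum[of \<beta> x n] assms by simp
  moreover
  \<comment> \<open>a digit above the orbit digit leaves a nonpositive remainder\<close>
  have "\<beta> * (qg_map \<beta> ^^ n) x \<le> real (?a n) + 1"
    using qg_orbit_Suc[of \<beta> x n] qg_map_le_1[of \<beta> "(qg_map \<beta> ^^ n) x"] assms by simp
  then have "(qg_map \<beta> ^^ n) x / \<beta> ^ n \<le> real (c n) / \<beta> ^ (n + 1)"
    using digit_gt assms(1) by (simp add: field_simps)
  ultimately show False by simp
qed

lemma quasi_greedy_eq_qg_digits:
  assumes "1 < \<beta>" "0 < x" "x \<le> 1"
  shows "quasi_greedy \<beta> x = qg_digits \<beta> x"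
  unfolding quasi_greedy_def
proof (rule the_equality)
  show "is_beta_exp_nez \<beta> x (qg_digits \<beta> x) \<and>
      (\<forall>b. is_beta_exp_nez \<beta> x b \<longrightarrow> b = qg_digits \<beta> x \<or> lex_less b (qg_digits \<beta> x))"
    using qg_digits_expansion[OF assms] qg_digits_lex_max[OF assms] by blast
next
  fix a
  assume "is_beta_exp_nez \<beta> x a \<and> (\<forall>b. is_beta_exp_nez \<beta> x b \<longrightarrow> b = a \<or> lex_less b a)"
  then show "a = qg_digits \<beta> x"
    using qg_digits_expansion[OF assms] qg_digits_lex_max[OF assms] lex_less_asym by metis
qed

lemma m_prefix_commute: "m_prefix \<beta> t u = m_prefix \<beta> u t"
  unfolding m_prefix_def by (simp add: eq_commute)

lemma m_prefix_refl: "m_prefix \<beta> t t = \<infinity>"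
proof -
  have "{enat k | k. k \<ge> 1 \<and> (\<forall>j<k. quasi_greedy \<beta> t j = quasi_greedy \<beta> t j)} = enat ` {1..}"
    by auto
  moreover have "infinite (enat ` {1::nat..})"
    using finite_imageD[of enat "{1::nat..}"] infinite_Ici[of "1::nat"] by (auto simp: inj_on_def)
  ultimately show ?thesis unfolding m_prefix_def Sup_enat_def by auto
qed

lemma m_prefix_eq_first_difference:
  assumes "\<forall>j<k. quasi_greedy \<beta> t j = quasi_greedy \<beta> u j"
    and "quasi_greedy \<beta> t k \<noteq> quasi_greedy \<beta> u k"
  shows "m_prefix \<beta> t u = enat k"
  unfolding m_prefix_def
proof (rule antisym)
  show "Sup {enat k |k. 1 \<le> k \<and> (\<forall>j<k. quasi_greedy \<beta> t j = quasi_greedy \<beta> u j)} \<le> enat k"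
    using assms(2) by (intro Sup_least) (auto simp: not_le[symmetric])
  show "enat k \<le> Sup {enat k |k. 1 \<le> k \<and> (\<forall>j<k. quasi_greedy \<beta> t j = quasi_greedy \<beta> u j)}"
    using assms(1) by (cases "k = 0") (auto simp: zero_enat_def[symmetric] intro: Sup_upper)
qed

lemma T_beta_eq_qg_map: "\<beta> * x \<notin> \<int> \<Longrightarrow> T_beta \<beta> x = qg_map \<beta> x"
  unfolding T_beta_def qg_map_def by (simp add: ceiling_altdef) (metis Ints_of_int)

lemma isCont_T_beta: "\<beta> * x \<notin> \<int> \<Longrightarrow> isCont (T_beta \<beta>) x"
proof -
  assume "\<beta> * x \<notin> \<int>"
  then have "isCont (\<lambda>x. frac (\<beta> * x)) x" by (intro isCont_o2[OF _ continuous_frac]) auto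
  then show ?thesis unfolding T_beta_def frac_def .
qed

lemma T_beta_iter_continuous_eq_qg_orbit:
  assumes "\<forall>i<n. \<beta> * (qg_map \<beta> ^^ i) v \<notin> \<int>"
  shows "isCont (T_beta \<beta> ^^ n) v \<and> (T_beta \<beta> ^^ n) v = (qg_map \<beta> ^^ n) v"
  using assms
proof (induction n)
  case (Suc n)
  then have "isCont (T_beta \<beta> ^^ n) v" "(T_beta \<beta> ^^ n) v = (qg_map \<beta> ^^ n) v"
    and "\<beta> * (qg_map \<beta> ^^ n) v \<notin> \<int>" by auto
  then have "isCont (T_beta \<beta>) ((T_beta \<beta> ^^ n) v)" by (simp add: isCont_T_beta)
  with Suc show ?case by (auto intro: isCont_o2 simp: T_beta_eq_qg_map)
qed simp

lemma K_set_change_witness: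
  assumes "0 < a" "a < b" "b < 1" "K_set \<beta> a \<noteq> K_set \<beta> b"
  obtains y where "a \<le> y" "y < b" "\<forall>k. (T_beta \<beta> ^^ k) y \<notin> {0<..<a}"
proof -
  have K: "K_set \<beta> s = {x \<in> {0..<1}. \<forall>k. (T_beta \<beta> ^^ k) x \<notin> {0<..<s}}" if "0 < s" "s < 1" for s
    using that unfolding K_set_def by auto
  have "K_set \<beta> b \<subseteq> K_set \<beta> a" using assms K by auto
  then obtain x where "x \<in> K_set \<beta> a" "x \<notin> K_set \<beta> b" using assms(4) by blast
  then obtain n where n: "(T_beta \<beta> ^^ n) x \<in> {0<..<b}"
    and avoid: "\<forall>k. (T_beta \<beta> ^^ k) x \<notin> {0<..<a}"
    using K assms by auto
  show ?thesis
  proof (rule that[of "(T_beta \<beta> ^^ n) x"])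
    show "\<forall>k. (T_beta \<beta> ^^ k) ((T_beta \<beta> ^^ n) x) \<notin> {0<..<a}"
      using avoid by (metis funpow_add o_apply)
    then show "a \<le> (T_beta \<beta> ^^ n) x" using n by (metis funpow_0 greaterThanLessThan_iff not_le)
  qed (use n in auto)
qed

lemma bifurcation_avoiding_orbit_nearby:
  assumes "bifurcation \<beta> v" "0 < v" "v < 1" "0 < \<delta>"
  obtains y s where "\<bar>y - v\<bar> < \<delta>" "v - \<delta> < s" "\<forall>k. (T_beta \<beta> ^^ k) y \<notin> {0<..<s}"
proof -
  define d where "d = min \<delta> (min v (1 - v))"
  have "0 < d" unfolding d_def using assms by simp
  then obtain t' where t': "\<bar>t' - v\<bar> < d" "K_set \<beta> t' \<noteq> K_set \<beta> v"
    using assms(1-3) unfolding bifurcation_def by blast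
  have "0 < t'" "t' < 1" "t' \<noteq> v" using t' unfolding d_def by auto
  then consider "t' < v" | "v < t'" by linarith
  then show ?thesis
  proof cases
    case 1
    with K_set_change_witness[of t' v \<beta>] obtain y
      where "t' \<le> y" "y < v" "\<forall>k. (T_beta \<beta> ^^ k) y \<notin> {0<..<t'}"
      using \<open>0 < t'\<close> assms(3) t'(2) by blast
    with that[of y t'] t'(1) 1 show ?thesis unfolding d_def by auto
  next
    case 2
    with K_set_change_witness[of v t' \<beta>] obtain y
      where "v \<le> y" "y < t'" "\<forall>k. (T_beta \<beta> ^^ k) y \<notin> {0<..<v}"
      using \<open>t' < 1\<close> assms(2) t'(2) by metis
    with that[of y v] t'(1) 2 assms(4) show ?thesis unfolding d_def by auto
  qed
qed

lemma bifurcation_qg_orbit_hits_1: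
  assumes "bifurcation \<beta> v" "0 < v" "v < 1" "(qg_map \<beta> ^^ n) v < v"
  shows "\<exists>j. 0 < j \<and> j \<le> n \<and> (qg_map \<beta> ^^ j) v = 1"
proof (rule ccontr)
  assume "\<not> ?thesis"
  then have "\<forall>i<n. \<beta> * (qg_map \<beta> ^^ i) v \<notin> \<int>"
    by (metis Suc_leI funpow.simps(2) o_apply qg_map_eq_1_iff zero_less_Suc)
  then have cont: "isCont (T_beta \<beta> ^^ n) v" and at_v: "(T_beta \<beta> ^^ n) v = (qg_map \<beta> ^^ n) v"
    using T_beta_iter_continuous_eq_qg_orbit by blast+
  define m where "m = ((qg_map \<beta> ^^ n) v + v) / 2"
  have "0 < (qg_map \<beta> ^^ n) v" using qg_orbit_gt_0[OF assms(2)] .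
  then have "(T_beta \<beta> ^^ n) v \<in> {0<..<m}" "m < v" using at_v assms(4) unfolding m_def by auto
  then have "\<forall>\<^sub>F z in nhds v. (T_beta \<beta> ^^ n) z \<in> {0<..<m}"
    using cont unfolding isCont_def tendsto_at_iff_tendsto_nhds
    by (intro topological_tendstoD) auto
  then obtain \<delta> where "0 < \<delta>" and \<delta>: "\<forall>z. dist z v < \<delta> \<longrightarrow> (T_beta \<beta> ^^ n) z \<in> {0<..<m}"
    unfolding eventually_nhds_metric by blast
  obtain y s where "\<bar>y - v\<bar> < min \<delta> (v - m)" "v - min \<delta> (v - m) < s"
    and avoid: "\<forall>k. (T_beta \<beta> ^^ k) y \<notin> {0<..<s}"
    using bifurcation_avoiding_orbit_nearby[OF assms(1-3), of "min \<delta> (v - m)"] \<open>0 < \<delta>\<close> \<open>m < v\<close>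
    by auto
  then have "(T_beta \<beta> ^^ n) y \<in> {0<..<s}" using \<delta> by (force simp: dist_real_def)
  with avoid show False by blast
qed

lemma positive_seq_bounded_below_until_dip:
  fixes a :: "nat \<Rightarrow> real"
  assumes "\<And>i. 0 < a i" "0 < t\<^sub>0"
  obtains c where "0 < c" "c \<le> t\<^sub>0" "\<And>r. c \<le> a r \<or> (\<exists>M<r. a M < t\<^sub>0)"
proof (cases "\<exists>i. a i < t\<^sub>0")
  case False
  show ?thesis by (rule that[of t\<^sub>0]) (use False assms(2) in \<open>auto simp: not_less\<close>)
next
  case True
  define M where "M = (LEAST i. a i < t\<^sub>0)"
  have "a M < t\<^sub>0" unfolding M_def using LeastI_ex[OF True] .
  show ?thesis
  proof (rule that[of "min t\<^sub>0 (Min (a ` {..M}))"])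
    show "0 < min t\<^sub>0 (Min (a ` {..M}))" using assms by (simp add: Min_gr_iff)
    fix r
    show "min t\<^sub>0 (Min (a ` {..M})) \<le> a r \<or> (\<exists>M<r. a M < t\<^sub>0)"
    proof (cases "r \<le> M")
      case True
      then show ?thesis by (simp add: min.coboundedI2)
    qed (use \<open>a M < t\<^sub>0\<close> in auto)
  qed simp
qed

lemma qg_digits_first_difference:
  assumes "1 < \<beta>" "0 < t" "t < u" "u \<le> 1"
  obtains k where "\<forall>j<k. qg_digits \<beta> t j = qg_digits \<beta> u j"
    and "qg_digits \<beta> t k \<noteq> qg_digits \<beta> u k"
proof -
  have "qg_digits \<beta> t \<noteq> qg_digits \<beta> u"
  proof
    assume same: "qg_digits \<beta> t = qg_digits \<beta> u"
    have "(\<lambda>i. real (qg_digits \<beta> u i) / \<beta> ^ (i + 1)) sums t"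
      using qg_digits_sums[OF assms(1,2)] assms(3,4) unfolding same by simp
    moreover have "(\<lambda>i. real (qg_digits \<beta> u i) / \<beta> ^ (i + 1)) sums u"
      using qg_digits_sums[OF assms(1)] assms(2-4) by simp
    ultimately show False using sums_unique2 assms(3) by blast
  qed
  then have ex: "\<exists>i. qg_digits \<beta> t i \<noteq> qg_digits \<beta> u i" by auto
  define k where "k = (LEAST i. qg_digits \<beta> t i \<noteq> qg_digits \<beta> u i)"
  show ?thesis
  proof (rule that[of k])
    show "\<forall>j<k. qg_digits \<beta> t j = qg_digits \<beta> u j" unfolding k_def using not_less_Least by blast
    show "qg_digits \<beta> t k \<noteq> qg_digits \<beta> u k" unfolding k_def using LeastI_ex[OF ex] .
  qed
qed

lemma qg_orbit_less_until_difference: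
  assumes "0 < \<beta>" "0 < t" "t < u" "\<forall>j<k. qg_digits \<beta> t j = qg_digits \<beta> u j" "i \<le> k"
  shows "(qg_map \<beta> ^^ i) t < (qg_map \<beta> ^^ i) u"
proof -
  have "\<forall>j<i. qg_digits \<beta> t j = qg_digits \<beta> u j" using assms(4,5) by simp
  then have "(qg_map \<beta> ^^ i) u - (qg_map \<beta> ^^ i) t = \<beta> ^ i * (u - t)"
    using qg_orbit_diff[OF assms(1,2), of u i] assms(2,3) by simp
  moreover have "0 < \<beta> ^ i * (u - t)" using assms(1,3) by simp
  ultimately show ?thesis by simp
qed

lemma qg_first_digit_difference:
  assumes "0 < \<beta>" "0 < t" "t < u" "u \<le> 1"
    and agree: "\<forall>j<k. qg_digits \<beta> t j = qg_digits \<beta> u j"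
    and differ: "qg_digits \<beta> t k \<noteq> qg_digits \<beta> u k"
  shows "u - t \<le> 1 / \<beta> ^ k" and "(qg_map \<beta> ^^ Suc k) u \<le> \<beta> ^ Suc k * (u - t)"
proof -
  let ?S = "\<lambda>i x. (qg_map \<beta> ^^ i) x"
  have diff: "?S k u - ?S k t = \<beta> ^ k * (u - t)"
    using qg_orbit_diff[OF assms(1-2) _ agree] assms by simp
  have bounds: "0 < ?S i t" "?S i t \<le> 1" "?S i u \<le> 1" for i
    using qg_orbit_gt_0 qg_orbit_le_1 assms by auto
  have "\<beta> ^ k * (u - t) \<le> 1" unfolding diff[symmetric] using bounds(1,3)[of k] by linarith
  then show "u - t \<le> 1 / \<beta> ^ k" using assms(1) by (simp add: field_simps)
  have "\<beta> ^ Suc k * (u - t) = \<beta> * (?S k u - ?S k t)" using diff by simp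
  also have "\<dots> = real (qg_digits \<beta> u k) - real (qg_digits \<beta> t k) + ?S (Suc k) u - ?S (Suc k) t"
    using qg_orbit_Suc[of \<beta> t k] qg_orbit_Suc[of \<beta> u k] assms by (simp add: algebra_simps)
  finally have step: "\<beta> ^ Suc k * (u - t)
      = real (qg_digits \<beta> u k) - real (qg_digits \<beta> t k) + ?S (Suc k) u - ?S (Suc k) t" .
  moreover have "0 < \<beta> ^ Suc k * (u - t)" using assms by simp
  ultimately have "qg_digits \<beta> t k < qg_digits \<beta> u k"
    using bounds[of "Suc k"] differ by linarith
  then show "?S (Suc k) u \<le> \<beta> ^ Suc k * (u - t)" using step bounds[of "Suc k"] by linarith
qed

lemma bifurcation_qg_orbit_lower_bound:
  assumes "0 < c" "c \<le> t\<^sub>0"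
    and dip: "\<And>r. c \<le> (qg_map \<beta> ^^ r) 1 \<or> (\<exists>M<r. (qg_map \<beta> ^^ M) 1 < t\<^sub>0)"
    and "t\<^sub>0 \<le> t" "t < u" "u < 1" "bifurcation \<beta> t" "bifurcation \<beta> u"
    and below: "\<forall>i<n. (qg_map \<beta> ^^ i) t < (qg_map \<beta> ^^ i) u"
  shows "c \<le> (qg_map \<beta> ^^ n) u"
proof (cases "u \<le> (qg_map \<beta> ^^ n) u")
  case True
  then show ?thesis using assms by linarith
next
  case False
  then obtain j where j: "0 < j" "j \<le> n" "(qg_map \<beta> ^^ j) u = 1"
    using bifurcation_qg_orbit_hits_1[of \<beta> u n] assms by auto
  have restart: "(qg_map \<beta> ^^ (r + j)) u = (qg_map \<beta> ^^ r) 1" for r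
    using j(3) by (simp add: funpow_add)
  have "(qg_map \<beta> ^^ n) u = (qg_map \<beta> ^^ (n - j)) 1" using restart[of "n - j"] j(2) by simp
  moreover
  have "\<not> (qg_map \<beta> ^^ M) 1 < t\<^sub>0" if "M < n - j" for M
  proof
    assume "(qg_map \<beta> ^^ M) 1 < t\<^sub>0"
    then have "(qg_map \<beta> ^^ (M + j)) t < t"
      using restart[of M] below[rule_format, of "M + j"] that assms(4) by linarith
    then obtain i where i: "0 < i" "i \<le> M + j" "(qg_map \<beta> ^^ i) t = 1"
      using bifurcation_qg_orbit_hits_1[of \<beta> t "M + j"] assms by auto
    then have "1 < (qg_map \<beta> ^^ i) u" using below[rule_format, of i] that by simp
    then show False using qg_orbit_le_1[of u i \<beta>] assms(6) by simp
  qed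
  ultimately show ?thesis using dip[of "n - j"] by auto
qed

lemma U_set_gap_bounds:
  assumes "1 < \<beta>" "0 < c" "c \<le> t\<^sub>0"
    and dip: "\<And>r. c \<le> (qg_map \<beta> ^^ r) 1 \<or> (\<exists>M<r. (qg_map \<beta> ^^ M) 1 < t\<^sub>0)"
    and t: "t \<in> U_set \<beta>" "t\<^sub>0 \<le> t" and u: "u \<in> U_set \<beta>" and "t < u"
  shows "c / \<beta> * beta_pow_neg \<beta> (m_prefix \<beta> t u) \<le> u - t \<and>
      u - t \<le> beta_pow_neg \<beta> (m_prefix \<beta> t u)"
proof -
  have "0 < t" "u < 1" "bifurcation \<beta> t" "bifurcation \<beta> u"
    using t u assms(2,3) unfolding U_set_def by auto
  have "0 < \<beta>" "u \<le> 1" using assms(1) \<open>u < 1\<close> by simp_all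
  have qg: "quasi_greedy \<beta> t = qg_digits \<beta> t" "quasi_greedy \<beta> u = qg_digits \<beta> u"
    using quasi_greedy_eq_qg_digits[OF assms(1)] \<open>0 < t\<close> \<open>t < u\<close> \<open>u \<le> 1\<close> by simp_all
  obtain k where agree: "\<forall>j<k. qg_digits \<beta> t j = qg_digits \<beta> u j"
    and differ: "qg_digits \<beta> t k \<noteq> qg_digits \<beta> u k"
    using qg_digits_first_difference[OF assms(1) \<open>0 < t\<close> \<open>t < u\<close> \<open>u \<le> 1\<close>] .
  have m: "m_prefix \<beta> t u = enat k"
    using m_prefix_eq_first_difference[of k \<beta> t u] agree differ unfolding qg by simp
  note gap = qg_first_digit_difference[OF \<open>0 < \<beta>\<close> \<open>0 < t\<close> \<open>t < u\<close> \<open>u \<le> 1\<close> agree differ]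
  have "\<forall>i<Suc k. (qg_map \<beta> ^^ i) t < (qg_map \<beta> ^^ i) u"
    using qg_orbit_less_until_difference[OF \<open>0 < \<beta>\<close> \<open>0 < t\<close> \<open>t < u\<close> agree] by simp
  then have "c \<le> (qg_map \<beta> ^^ Suc k) u"
    by (rule bifurcation_qg_orbit_lower_bound[OF assms(2-4) t(2) \<open>t < u\<close> \<open>u < 1\<close>
          \<open>bifurcation \<beta> t\<close> \<open>bifurcation \<beta> u\<close>])
  with gap(2) have "c \<le> \<beta> ^ Suc k * (u - t)" by linarith
  then have "c / \<beta> * (1 / \<beta> ^ k) \<le> u - t" using \<open>0 < \<beta>\<close> by (simp add: field_simps)
  with gap(1) show ?thesis by (simp add: m beta_pow_neg_def)
qed

theorem mainTheorem8:
  fixes \<beta> t\<^sub>0 :: real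
  assumes "\<beta> > 1" and "t\<^sub>0 > 0"
  shows "\<exists>C\<^sub>1>0. \<forall>t\<in>U_set \<beta> \<inter> {t\<^sub>0..1}. \<forall>u\<in>U_set \<beta> \<inter> {t\<^sub>0..1}.
           C\<^sub>1 * beta_pow_neg \<beta> (m_prefix \<beta> t u) \<le> \<bar>t - u\<bar> \<and>
           \<bar>t - u\<bar> \<le> beta_pow_neg \<beta> (m_prefix \<beta> t u)"
proof -
  obtain c where c: "0 < c" "c \<le> t\<^sub>0"
    and dip: "\<And>r. c \<le> (qg_map \<beta> ^^ r) 1 \<or> (\<exists>M<r. (qg_map \<beta> ^^ M) 1 < t\<^sub>0)"
    using positive_seq_bounded_below_until_dip[of "\<lambda>r. (qg_map \<beta> ^^ r) 1" t\<^sub>0]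
      qg_orbit_gt_0[of 1] assms(2) by auto
  have "c / \<beta> * beta_pow_neg \<beta> (m_prefix \<beta> t u) \<le> \<bar>t - u\<bar> \<and>
      \<bar>t - u\<bar> \<le> beta_pow_neg \<beta> (m_prefix \<beta> t u)"
    if "t \<in> U_set \<beta> \<inter> {t\<^sub>0..1}" "u \<in> U_set \<beta> \<inter> {t\<^sub>0..1}" for t u
  proof (cases t u rule: linorder_cases)
    case less
    then show ?thesis using U_set_gap_bounds[OF assms(1) c dip, of t u] that by auto
  next
    case equal
    then show ?thesis by (simp add: m_prefix_refl beta_pow_neg_def)
  next
    case greater
    then show ?thesis
      using U_set_gap_bounds[OF assms(1) c dip, of u t] that m_prefix_commute[of \<beta> t u] by auto
  qed
  moreover have "0 < c / \<beta>" using c assms(1) by simp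
  ultimately show ?thesis by blast
qed

end
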